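(* Let $\psi:\mathbb{R}^n\to\mathbb{R}$, $\psi(x)=u^Tx$ with $u\in\mathbb{Z}^n$. Let $F\subseteq\mathbb{R}^n$ be an $(n-1)$-dimensional lattice polytope, $v\in\mathbb{Z}^n\setminus\mathrm{aff}(F)$, $P=\mathrm{conv}(F\cup\{v\})$, and let $w$ be an outer normal vector of the facet $F$ of $P$. Assume that for every integer $i$ the maximizer $[P]_i$ is unique. Then \[ \mathrm{face}_w(\Sigma_\psi(P))=\begin{cases}\Sigma_\psi(F) & \text{if } \psi(v)\in\psi(F),\\[2pt] \Sigma_\psi(F)+\sum_{i=\max_{x\in F}\psi(x)}^{\psi(v)-1}[P]_i & \text{if } \psi(v)>\max_{x\in F}\psi(x),\\[2pt] \Sigma_\psi(F)+\sum_{i=\psi(v)}^{\min_{x\in F}\psi(x)-1}[P]_i & \text{if } \psi(v)<\min_{x\in F}\psi(x).\end{cases} \]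
   Context: For a polytope $Q$, $\mathrm{face}_w(Q)=\arg\max_{x\in Q}w^Tx$. For a lattice polytope $Q$ let $\psi_Q=\min_{x\in Q}\psi(x)$ and $\psi^Q=\max_{x\in Q}\psi(x)$ (integers). The fiber polytope is the Minkowski integral $\Sigma_\psi(Q)=\int_{\psi(Q)}(\psi^{-1}(x)\cap Q)\,dx$, which for lattice polytopes equals $\sum_{i=\psi_Q}^{\psi^Q-1}\big(\psi^{-1}(i+\tfrac12)\cap Q\big)$ (Minkowski sum). For $i\in\mathbb{Z}$, $[Q]_i:=\arg\max_{x\in Q\cap\psi^{-1}(i+\frac12)}w^Tx$. *)

theory Defs
  imports "HOL-Analysis.Analysis" "HOL-Library.Set_Algebras"
begin

definition lattice_point :: "real^'n \<Rightarrow> bool" where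
  "lattice_point x \<longleftrightarrow> (\<forall>i. x $ i \<in> \<int>)"

definition lattice_polytope :: "(real^'n) set \<Rightarrow> bool" where
  "lattice_polytope Q \<longleftrightarrow> (\<exists>S. finite S \<and> (\<forall>x\<in>S. lattice_point x) \<and> Q = convex hull S)"

definition face_w :: "real^'n \<Rightarrow> (real^'n) set \<Rightarrow> (real^'n) set" where
  "face_w w Q = {x \<in> Q. \<forall>y\<in>Q. w \<bullet> y \<le> w \<bullet> x}"

definition psi_min :: "real^'n \<Rightarrow> (real^'n) set \<Rightarrow> real" where
  "psi_min u Q = Inf ((\<lambda>x. u \<bullet> x) ` Q)"

definition psi_max :: "real^'n \<Rightarrow> (real^'n) set \<Rightarrow> real" where
  "psi_max u Q = Sup ((\<lambda>x. u \<bullet> x) ` Q)"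

text \<open>Fiber polytope Sigma_psi(Q) = sum_{i = psi_Q}^{psi^Q - 1} (psi^{-1}(i+1/2) \<inter> Q),
  a Minkowski sum (set addition from Set_Algebras).\<close>
definition fiber_polytope :: "real^'n \<Rightarrow> (real^'n) set \<Rightarrow> (real^'n) set" where
  "fiber_polytope u Q =
     (\<Sum>i\<in>{i::int. psi_min u Q \<le> of_int i \<and> of_int i \<le> psi_max u Q - 1}.
        {x \<in> Q. u \<bullet> x = of_int i + 1/2})"

definition bracket :: "real^'n \<Rightarrow> real^'n \<Rightarrow> (real^'n) set \<Rightarrow> int \<Rightarrow> (real^'n) set" where
  "bracket w u Q i = face_w w {x \<in> Q. u \<bullet> x = of_int i + 1/2}"

end

theory Submission
  imports Defs
begin

text \<open>Maximizing a linear functional over a Minkowski sum is done summand by summand, so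
  \<open>face_w\<close> is additive on sums of compact sets. The fiber polytope is such a sum of slices
  of \<open>P\<close>, so its \<open>w\<close>-face is the sum of the \<open>w\<close>-faces \<open>[P]\<^sub>i\<close> of the slices. Whenever the
  slice at height \<open>i + 1/2\<close> meets the facet \<open>F = face_w w P\<close>, its \<open>w\<close>-face is just the
  slice of \<open>F\<close>; these slices sum to \<open>\<Sigma>\<^sub>\<psi>(F)\<close>. The remaining heights are those between
  \<open>\<psi>(F)\<close> and \<open>\<psi>(v)\<close>, contributing the extra terms \<open>[P]\<^sub>i\<close>.\<close>

definition slice :: "real^'n \<Rightarrow> (real^'n) set \<Rightarrow> real \<Rightarrow> (real^'n) set" where
  "slice u Q c = {x \<in> Q. u \<bullet> x = c}"

definition fiber_indices :: "real^'n \<Rightarrow> (real^'n) set \<Rightarrow> int set" where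
  "fiber_indices u Q = {i. psi_min u Q \<le> of_int i \<and> of_int i \<le> psi_max u Q - 1}"

lemma fiber_polytope_eq_sum_slice:
  "fiber_polytope u Q = (\<Sum>i\<in>fiber_indices u Q. slice u Q (of_int i + 1/2))"
  unfolding fiber_polytope_def fiber_indices_def slice_def ..

lemma bracket_eq_face_w_slice: "bracket w u Q i = face_w w (slice u Q (of_int i + 1/2))"
  unfolding bracket_def slice_def ..

lemma finite_fiber_indices: "finite (fiber_indices u Q)"
  unfolding fiber_indices_def
  by (rule finite_subset[of _ "{ceiling (psi_min u Q) .. floor (psi_max u Q)}"])
    (auto simp: ceiling_le le_floor_iff)

lemma Ints_le_minus_one_or_ge:
  fixes k :: real
  assumes "k \<in> \<int>"
  shows "of_int i \<le> k - 1 \<or> k \<le> of_int i"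
proof -
  obtain k' where k': "k = of_int k'" using assms by (auto elim: Ints_cases)
  show ?thesis
  proof (cases "i < k'")
    case True
    then have "of_int i \<le> (of_int (k' - 1) :: real)" by simp
    then show ?thesis unfolding k' by simp
  qed (simp add: k')
qed

subsection \<open>Faces of Minkowski sums\<close>

lemma face_w_set_plus:
  fixes A B :: "(real^'n) set"
  assumes "face_w w A \<noteq> {}" "face_w w B \<noteq> {}"
  shows "face_w w (A + B) = face_w w A + face_w w B"
proof
  obtain a0 where a0: "a0 \<in> A" "\<forall>y\<in>A. w \<bullet> y \<le> w \<bullet> a0" using assms(1) unfolding face_w_def by auto
  obtain b0 where b0: "b0 \<in> B" "\<forall>y\<in>B. w \<bullet> y \<le> w \<bullet> b0" using assms(2) unfolding face_w_def by auto
  show "face_w w (A + B) \<subseteq> face_w w A + face_w w B"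
  proof
    fix x assume "x \<in> face_w w (A + B)"
    then have x_max: "\<forall>y\<in>A + B. w \<bullet> y \<le> w \<bullet> x" and "x \<in> A + B" unfolding face_w_def by auto
    then obtain a b where ab: "x = a + b" "a \<in> A" "b \<in> B" by (auto elim: set_plus_elim)
    have "w \<bullet> a0 + w \<bullet> b0 \<le> w \<bullet> a + w \<bullet> b"
      using x_max a0 b0 ab by (metis inner_add_right set_plus_intro)
    moreover have "w \<bullet> a \<le> w \<bullet> a0" "w \<bullet> b \<le> w \<bullet> b0" using a0 b0 ab by auto
    ultimately have "w \<bullet> a = w \<bullet> a0" "w \<bullet> b = w \<bullet> b0" by linarith+
    then have "a \<in> face_w w A" "b \<in> face_w w B"
      using a0 b0 ab unfolding face_w_def by auto
    then show "x \<in> face_w w A + face_w w B" using ab by auto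
  qed
next
  show "face_w w A + face_w w B \<subseteq> face_w w (A + B)"
    unfolding face_w_def
    by (force elim!: set_plus_elim simp: inner_add_right intro: add_mono)
qed

lemma set_sum_nonempty:
  fixes A :: "'i \<Rightarrow> 'a::comm_monoid_add set"
  assumes "\<And>i. i \<in> I \<Longrightarrow> A i \<noteq> {}"
  shows "(\<Sum>i\<in>I. A i) \<noteq> {}"
  using assms
proof (induction I rule: infinite_finite_induct)
  case (insert i I)
  then show ?case by (auto simp: set_plus_def)
qed auto

lemma face_w_sum:
  fixes A :: "'i \<Rightarrow> (real^'n) set"
  assumes "finite I" "\<And>i. i \<in> I \<Longrightarrow> face_w w (A i) \<noteq> {}"
  shows "face_w w (\<Sum>i\<in>I. A i) = (\<Sum>i\<in>I. face_w w (A i))"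
  using assms
proof (induction I rule: finite_induct)
  case empty
  then show ?case by (auto simp: face_w_def)
next
  case (insert i I)
  then have "face_w w (sum A I) \<noteq> {}" by (simp add: set_sum_nonempty)
  with insert show ?case by (simp add: face_w_set_plus)
qed

subsection \<open>Slices of polytopes\<close>

lemma face_w_nonempty_compact:
  assumes "compact K" "K \<noteq> {}"
  shows "face_w w K \<noteq> {}"
  using continuous_attains_sup[OF assms continuous_on_inner[OF continuous_on_const continuous_on_id]]
  unfolding face_w_def by auto

lemma psi_max_convex_hull:
  assumes "finite S" "S \<noteq> {}"
  shows "psi_max u (convex hull S) = Max ((\<lambda>x. u \<bullet> x) ` S)"
  unfolding psi_max_def
proof (rule cSup_eq_maximum)
  show "Max ((\<lambda>x. u \<bullet> x) ` S) \<in> (\<lambda>x. u \<bullet> x) ` (convex hull S)"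
    using Max_in[of "(\<lambda>x. u \<bullet> x) ` S"] assms hull_subset[of S convex] by blast
  have "convex hull S \<subseteq> {x. u \<bullet> x \<le> Max ((\<lambda>x. u \<bullet> x) ` S)}"
    using assms(1) by (intro hull_minimal) (auto intro: convex_halfspace_le)
  then show "\<And>y. y \<in> (\<lambda>x. u \<bullet> x) ` (convex hull S) \<Longrightarrow> y \<le> Max ((\<lambda>x. u \<bullet> x) ` S)"
    by auto
qed

lemma psi_min_convex_hull:
  assumes "finite S" "S \<noteq> {}"
  shows "psi_min u (convex hull S) = Min ((\<lambda>x. u \<bullet> x) ` S)"
  unfolding psi_min_def
proof (rule cInf_eq_minimum)
  show "Min ((\<lambda>x. u \<bullet> x) ` S) \<in> (\<lambda>x. u \<bullet> x) ` (convex hull S)"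
    using Min_in[of "(\<lambda>x. u \<bullet> x) ` S"] assms hull_subset[of S convex] by blast
  have "convex hull S \<subseteq> {x. Min ((\<lambda>x. u \<bullet> x) ` S) \<le> u \<bullet> x}"
    using assms(1) by (intro hull_minimal) (auto intro: convex_halfspace_ge)
  then show "\<And>y. y \<in> (\<lambda>x. u \<bullet> x) ` (convex hull S) \<Longrightarrow> Min ((\<lambda>x. u \<bullet> x) ` S) \<le> y"
    by auto
qed

lemma slice_convex_hull_nonempty:
  assumes "finite S" "S \<noteq> {}"
    and "psi_min u (convex hull S) \<le> c" "c \<le> psi_max u (convex hull S)"
  shows "slice u (convex hull S) c \<noteq> {}"
proof -
  have "Min ((\<lambda>x. u \<bullet> x) ` S) \<in> (\<lambda>x. u \<bullet> x) ` S" "Max ((\<lambda>x. u \<bullet> x) ` S) \<in> (\<lambda>x. u \<bullet> x) ` S"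
    using assms(1,2) by simp_all
  then obtain a b where a: "a \<in> S" "u \<bullet> a = Min ((\<lambda>x. u \<bullet> x) ` S)"
    and b: "b \<in> S" "u \<bullet> b = Max ((\<lambda>x. u \<bullet> x) ` S)"
    by (metis imageE)
  have "\<exists>z\<in>convex hull S. u \<bullet> z = c"
  proof (rule connected_ivt_hyperplane)
    show "connected (convex hull S)" by (simp add: convex_connected)
    show "a \<in> convex hull S" "b \<in> convex hull S" using a b hull_subset[of S convex] by auto
    show "u \<bullet> a \<le> c" "c \<le> u \<bullet> b"
      using a b assms psi_min_convex_hull psi_max_convex_hull by metis+
  qed
  then show ?thesis unfolding slice_def by auto
qed

lemma compact_slice_convex_hull:
  assumes "finite S"
  shows "compact (slice u (convex hull S) c)"
proof -
  have "slice u (convex hull S) c = convex hull S \<inter> {x. u \<bullet> x = c}"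
    unfolding slice_def by auto
  then show ?thesis
    using compact_Int_closed[OF compact_convex_hull[OF finite_imp_compact[OF assms]] closed_hyperplane]
    by simp
qed

lemma face_w_fiber_polytope_convex_hull:
  assumes "finite S" "S \<noteq> {}"
  shows "face_w w (fiber_polytope u (convex hull S))
           = (\<Sum>i\<in>fiber_indices u (convex hull S). bracket w u (convex hull S) i)"
  unfolding fiber_polytope_eq_sum_slice bracket_eq_face_w_slice
proof (rule face_w_sum[OF finite_fiber_indices])
  fix i assume "i \<in> fiber_indices u (convex hull S)"
  then have "slice u (convex hull S) (of_int i + 1/2) \<noteq> {}"
    using assms by (intro slice_convex_hull_nonempty) (auto simp: fiber_indices_def)
  then show "face_w w (slice u (convex hull S) (of_int i + 1/2)) \<noteq> {}"
    by (intro face_w_nonempty_compact compact_slice_convex_hull assms(1))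
qed

lemma face_w_slice_meeting_face:
  assumes "slice u (face_w w P) c \<noteq> {}"
  shows "face_w w (slice u P c) = slice u (face_w w P) c"
  using assms unfolding face_w_def slice_def by force

lemma sum_bracket_facet:
  assumes "face_w w P = convex hull S" "finite S" "S \<noteq> {}"
  shows "(\<Sum>i\<in>fiber_indices u (convex hull S). bracket w u P i) = fiber_polytope u (convex hull S)"
  unfolding fiber_polytope_eq_sum_slice bracket_eq_face_w_slice
proof (rule sum.cong[OF refl])
  fix i assume "i \<in> fiber_indices u (convex hull S)"
  then have "slice u (face_w w P) (of_int i + 1/2) \<noteq> {}"
    using assms by (intro slice_convex_hull_nonempty[of S, folded assms(1)]) (auto simp: fiber_indices_def)
  then show "face_w w (slice u P (of_int i + 1/2)) = slice u (convex hull S) (of_int i + 1/2)"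
    using face_w_slice_meeting_face assms(1) by metis
qed

lemma lattice_inner_Ints:
  assumes "lattice_point u" "lattice_point s"
  shows "u \<bullet> s \<in> \<int>"
  using assms unfolding lattice_point_def inner_vec_def
  by (intro Ints_sum Ints_mult) auto

lemma psi_convex_hull_Ints:
  assumes "lattice_point u" "finite S" "S \<noteq> {}" "\<forall>x\<in>S. lattice_point x"
  shows "psi_min u (convex hull S) \<in> \<int>" "psi_max u (convex hull S) \<in> \<int>"
proof -
  have "Min ((\<lambda>x. u \<bullet> x) ` S) \<in> (\<lambda>x. u \<bullet> x) ` S" "Max ((\<lambda>x. u \<bullet> x) ` S) \<in> (\<lambda>x. u \<bullet> x) ` S"
    using assms(2,3) by simp_all
  then obtain a b where "a \<in> S" "Min ((\<lambda>x. u \<bullet> x) ` S) = u \<bullet> a"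
    and "b \<in> S" "Max ((\<lambda>x. u \<bullet> x) ` S) = u \<bullet> b"
    by (metis imageE)
  then show "psi_min u (convex hull S) \<in> \<int>" "psi_max u (convex hull S) \<in> \<int>"
    using assms lattice_inner_Ints[OF assms(1)] by (simp_all add: psi_min_convex_hull psi_max_convex_hull)
qed

lemma psi_convex_hull_insert:
  assumes "finite S" "S \<noteq> {}"
  shows "psi_min u (convex hull (insert v S)) = min (u \<bullet> v) (psi_min u (convex hull S))"
    "psi_max u (convex hull (insert v S)) = max (u \<bullet> v) (psi_max u (convex hull S))"
  using assms by (simp_all add: psi_min_convex_hull psi_max_convex_hull)

lemma psi_bounds_compact:
  assumes "compact Q" "x \<in> Q"
  shows "psi_min u Q \<le> u \<bullet> x" "u \<bullet> x \<le> psi_max u Q"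
proof -
  have "bounded ((\<lambda>x. u \<bullet> x) ` Q)"
    using assms(1) by (intro compact_imp_bounded compact_continuous_image continuous_intros)
  then show "psi_min u Q \<le> u \<bullet> x" "u \<bullet> x \<le> psi_max u Q"
    unfolding psi_min_def psi_max_def using assms(2)
    by (auto intro: cInf_lower cSup_upper bounded_imp_bdd_below bounded_imp_bdd_above)
qed

lemma fiber_indices_mono:
  assumes "compact Q" "R \<noteq> {}" "R \<subseteq> Q"
  shows "fiber_indices u R \<subseteq> fiber_indices u Q"
proof -
  have "bounded ((\<lambda>x. u \<bullet> x) ` Q)"
    using assms(1) by (intro compact_imp_bounded compact_continuous_image continuous_intros)
  then have "psi_min u Q \<le> psi_min u R" "psi_max u R \<le> psi_max u Q"
    unfolding psi_min_def psi_max_def using assms(2,3)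
    by (auto intro!: cInf_superset_mono cSup_subset_mono bounded_imp_bdd_below bounded_imp_bdd_above)
  then show ?thesis unfolding fiber_indices_def by auto
qed

lemma face_w_fiber_polytope_facet:
  assumes "finite T" "T \<noteq> {}" "finite S" "S \<noteq> {}" "face_w w (convex hull T) = convex hull S"
  shows "face_w w (fiber_polytope u (convex hull T)) = fiber_polytope u (convex hull S)
           + (\<Sum>i\<in>fiber_indices u (convex hull T) - fiber_indices u (convex hull S). bracket w u (convex hull T) i)"
proof -
  have "convex hull S \<subseteq> convex hull T" using assms(5) unfolding face_w_def by auto
  then have indices_sub: "fiber_indices u (convex hull S) \<subseteq> fiber_indices u (convex hull T)"
    using assms(1,4) by (intro fiber_indices_mono compact_convex_hull finite_imp_compact) auto
  have sum_S: "(\<Sum>i\<in>fiber_indices u (convex hull S). bracket w u (convex hull T) i) = fiber_polytope u (convex hull S)"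
    using assms(5,3,4) by (rule sum_bracket_facet)
  have "face_w w (fiber_polytope u (convex hull T)) = (\<Sum>i\<in>fiber_indices u (convex hull T). bracket w u (convex hull T) i)"
    using assms(1,2) by (rule face_w_fiber_polytope_convex_hull)
  also have "\<dots> = (\<Sum>i\<in>fiber_indices u (convex hull T) - fiber_indices u (convex hull S). bracket w u (convex hull T) i)
                   + (\<Sum>i\<in>fiber_indices u (convex hull S). bracket w u (convex hull T) i)"
    by (rule sum.subset_diff[OF indices_sub finite_fiber_indices])
  finally show ?thesis unfolding sum_S by (simp add: add.commute)
qed

theorem theorem4p8:
  fixes u v w :: "real^'n" and F P :: "(real^'n) set"
  assumes u_int: "lattice_point u"
    and F_lat: "lattice_polytope F"
    and F_dim: "aff_dim F = int CARD('n) - 1"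
    and v_int: "lattice_point v"
    and v_notin: "v \<notin> affine hull F"
    and P_def: "P = convex hull (F \<union> {v})"
    and w_nz: "w \<noteq> 0"
    and w_facet: "face_w w P = F"
    and unique: "\<And>i::int. \<forall>x\<in>bracket w u P i. \<forall>y\<in>bracket w u P i. x = y"
  shows "(u \<bullet> v \<in> (\<lambda>x. u \<bullet> x) ` F \<longrightarrow>
            face_w w (fiber_polytope u P) = fiber_polytope u F)
       \<and> (u \<bullet> v > psi_max u F \<longrightarrow>
            face_w w (fiber_polytope u P) = fiber_polytope u F +
              (\<Sum>i\<in>{i::int. psi_max u F \<le> of_int i \<and> of_int i \<le> u \<bullet> v - 1}. bracket w u P i))
       \<and> (u \<bullet> v < psi_min u F \<longrightarrow>
            face_w w (fiber_polytope u P) = fiber_polytope u F +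
              (\<Sum>i\<in>{i::int. u \<bullet> v \<le> of_int i \<and> of_int i \<le> psi_min u F - 1}. bracket w u P i))"
proof -
  obtain S where S: "finite S" "\<forall>x\<in>S. lattice_point x" and F_hull: "F = convex hull S"
    using F_lat unfolding lattice_polytope_def by blast
  have "F \<noteq> {}" using F_dim by auto
  then have "S \<noteq> {}" using F_hull by auto
  have P_hull: "P = convex hull (insert v S)"
    unfolding P_def F_hull using hull_Un_left[of convex S "{v}"] by simp
  have face_P: "face_w w (fiber_polytope u P)
      = fiber_polytope u F + (\<Sum>i\<in>fiber_indices u P - fiber_indices u F. bracket w u P i)"
    using face_w_fiber_polytope_facet[of "insert v S" S w u] S(1) \<open>S \<noteq> {}\<close> w_facet
    unfolding P_hull F_hull by simp
  have psi_P: "psi_min u P = min (u \<bullet> v) (psi_min u F)" "psi_max u P = max (u \<bullet> v) (psi_max u F)"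
    unfolding P_hull F_hull by (rule psi_convex_hull_insert[OF S(1) \<open>S \<noteq> {}\<close>])+
  have psi_F_Ints: "psi_min u F \<in> \<int>" "psi_max u F \<in> \<int>"
    unfolding F_hull by (rule psi_convex_hull_Ints[OF u_int S(1) \<open>S \<noteq> {}\<close> S(2)])+
  have "compact F"
    unfolding F_hull by (intro compact_convex_hull finite_imp_compact S(1))
  obtain x where "x \<in> F" using \<open>F \<noteq> {}\<close> by blast
  then have psi_F_le: "psi_min u F \<le> psi_max u F"
    using psi_bounds_compact[OF \<open>compact F\<close>] by (meson order.trans)
  show ?thesis
  proof (intro conjI impI)
    assume "u \<bullet> v \<in> (\<lambda>x. u \<bullet> x) ` F"
    then have "psi_min u F \<le> u \<bullet> v" "u \<bullet> v \<le> psi_max u F"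
      using psi_bounds_compact[OF \<open>compact F\<close>] by auto
    then have "fiber_indices u P = fiber_indices u F"
      unfolding fiber_indices_def psi_P by (simp add: min_absorb2 max_absorb2)
    then show "face_w w (fiber_polytope u P) = fiber_polytope u F" using face_P by simp
  next
    assume "u \<bullet> v > psi_max u F"
    then have "fiber_indices u P - fiber_indices u F
        = {i. psi_max u F \<le> of_int i \<and> of_int i \<le> u \<bullet> v - 1}"
      using psi_F_le Ints_le_minus_one_or_ge[OF psi_F_Ints(2)]
      unfolding fiber_indices_def psi_P by fastforce
    then show "face_w w (fiber_polytope u P) = fiber_polytope u F +
        (\<Sum>i\<in>{i::int. psi_max u F \<le> of_int i \<and> of_int i \<le> u \<bullet> v - 1}. bracket w u P i)"
      using face_P by simp
  next
    assume "u \<bullet> v < psi_min u F"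
    then have "fiber_indices u P - fiber_indices u F
        = {i. u \<bullet> v \<le> of_int i \<and> of_int i \<le> psi_min u F - 1}"
      using psi_F_le Ints_le_minus_one_or_ge[OF psi_F_Ints(1)]
      unfolding fiber_indices_def psi_P by fastforce
    then show "face_w w (fiber_polytope u P) = fiber_polytope u F +
        (\<Sum>i\<in>{i::int. u \<bullet> v \<le> of_int i \<and> of_int i \<le> psi_min u F - 1}. bracket w u P i)"
      using face_P by simp
  qed
qed

end
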